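(* For all $n\ge 3$ and $0<k<n-1$, $f(n,k)=f(n,k-1)-f(n-1,k-2)$ (with $f(n-1,-1)=0$).
   Context: A complete non-ambiguous matrix (CNM) of size $n$ is an $n\times n$ matrix $M=(m_{i,j})$ with entries in $\{0,1\}$ whose support $T=\{(i,j): m_{i,j}=1\}$ (whose elements are called vertices) satisfies: (1) $(1,1)\in T$; (2) for every $p=(i,j)\in T$ with $p\neq(1,1)$, exactly one of the following holds: there is $(i',j)\in T$ with $i'<i$, or there is $(i,j')\in T$ with $j'<j$; (3) every row and every column of $M$ contains at least one vertex; (4) define the parent of $p=(i,j)\neq(1,1)$ to be $(i',j)$ with $i'<i$ maximal if such a vertex exists, and otherwise $(i,j')$ with $j'<j$ maximal; then every vertex is the parent of either zero or exactly two vertices. A vertex with no children is a leaf. A CNM of size $n$ is upper-diagonal if its leaves are exactly the positions $(i,n+1-i)$, $1\le i\le n$. For $n\ge 2$ and $0\le k\le n-2$, $f(n,k)$ is the number of upper-diagonal CNMs $M$ of size $n$ with $m_{i,n-i}=0$ for $1\le i\le k$ and $m_{k+1,n-k-1}=1$; $f(n,n-1)$ is the number of upper-diagonal CNMs of size $n$ with $m_{i,n-i}=0$ for all $1\le i\le n-1$; by convention $f(n,-1)=0$. *)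

theory Defs
  imports Main
begin

text \<open>An n x n 0/1 matrix is represented by its support T (set of positions (i,j) with
  1 <= i,j <= n and entry 1). Rows/columns are indexed 1..n.\<close>

definition parent :: "(nat \<times> nat) set \<Rightarrow> nat \<times> nat \<Rightarrow> nat \<times> nat" where
  "parent T p = (let i = fst p; j = snd p in
     if (\<exists>i'<i. (i', j) \<in> T) then (GREATEST i'. i' < i \<and> (i', j) \<in> T, j)
     else (i, GREATEST j'. j' < j \<and> (i, j') \<in> T))"

definition children :: "(nat \<times> nat) set \<Rightarrow> nat \<times> nat \<Rightarrow> (nat \<times> nat) set" where
  "children T q = {p \<in> T. p \<noteq> (1,1) \<and> parent T p = q}"

definition is_CNM :: "nat \<Rightarrow> (nat \<times> nat) set \<Rightarrow> bool" where
  "is_CNM n T \<longleftrightarrow>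
     T \<subseteq> {1..n} \<times> {1..n} \<and>
     (1,1) \<in> T \<and>
     (\<forall>(i,j)\<in>T. (i,j) \<noteq> (1,1) \<longrightarrow>
         ((\<exists>i'<i. (i',j) \<in> T) \<noteq> (\<exists>j'<j. (i,j') \<in> T))) \<and>
     (\<forall>i\<in>{1..n}. \<exists>j. (i,j) \<in> T) \<and>
     (\<forall>j\<in>{1..n}. \<exists>i. (i,j) \<in> T) \<and>
     (\<forall>q\<in>T. card (children T q) = 0 \<or> card (children T q) = 2)"

definition leaves :: "(nat \<times> nat) set \<Rightarrow> (nat \<times> nat) set" where
  "leaves T = {q \<in> T. children T q = {}}"

definition upper_diagonal_CNM :: "nat \<Rightarrow> (nat \<times> nat) set \<Rightarrow> bool" where
  "upper_diagonal_CNM n T \<longleftrightarrow> is_CNM n T \<and> leaves T = {(i, n + 1 - i) | i. 1 \<le> i \<and> i \<le> n}"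

text \<open>f n k, with k an integer; f n (-1) = 0 by convention; defined for n >= 2 and
  -1 <= k <= n-1 (value 0 outside that range, never used).\<close>
definition f :: "nat \<Rightarrow> int \<Rightarrow> int" where
  "f n k =
    (if k = -1 then 0
     else if 0 \<le> k \<and> k \<le> int n - 2 then
       int (card {T. upper_diagonal_CNM n T \<and>
                    (\<forall>i. 1 \<le> i \<and> i \<le> nat k \<longrightarrow> (i, n - i) \<notin> T) \<and>
                    (nat k + 1, n - nat k - 1) \<in> T})
     else if k = int n - 1 then
       int (card {T. upper_diagonal_CNM n T \<and>
                    (\<forall>i. 1 \<le> i \<and> i \<le> n - 1 \<longrightarrow> (i, n - i) \<notin> T)})
     else 0)"

end

theory Submission
  imports Defs
begin

text \<open>Let \<open>n = N + 1\<close>. If the subdiagonal position \<open>(i, n - i)\<close> is a vertex of an upper-diagonal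
  CNM \<open>S\<close>, its children are the two antidiagonal leaves \<open>(i, n + 1 - i)\<close> and \<open>(i + 1, n - i)\<close>,
  which are alone in their column and row respectively. Deleting that row and column leaves an
  upper-diagonal CNM of size \<open>N\<close> (in which \<open>(i, N + 1 - i)\<close> is a leaf), and every upper-diagonal
  CNM of size \<open>N\<close> grows back uniquely by grafting such a cherry. Since the subdiagonal position
  \<open>(i - 1, n + 1 - i)\<close> lies in the deleted column, \<open>S\<close> avoids the first \<open>i - 1\<close> subdiagonal
  positions iff the smaller matrix avoids its first \<open>i - 2\<close>. Writing \<open>A(N, j)\<close> for the number
  of upper-diagonal CNMs of size \<open>N\<close> avoiding the first \<open>j\<close> subdiagonal positions, this gives
  \<open>f(n, k) = A(N, k - 1)\<close> and \<open>f(n, k - 1) = A(N, k - 2)\<close>, while directly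
  \<open>f(N, k - 2) = A(N, k - 2) - A(N, k - 1)\<close>.\<close>

section \<open>Parents as a relation\<close>

definition has_above :: "(nat \<times> nat) set \<Rightarrow> nat \<times> nat \<Rightarrow> bool" where
  "has_above T p \<longleftrightarrow> (\<exists>i'<fst p. (i', snd p) \<in> T)"

definition has_left :: "(nat \<times> nat) set \<Rightarrow> nat \<times> nat \<Rightarrow> bool" where
  "has_left T p \<longleftrightarrow> (\<exists>j'<snd p. (fst p, j') \<in> T)"

text \<open>A description of \<open>parent\<close> free of \<open>GREATEST\<close> (valid whenever \<open>p\<close> has a predecessor); unlike
  \<open>parent\<close> it transports directly along order embeddings of the rows and columns.\<close>

definition is_parent :: "(nat \<times> nat) set \<Rightarrow> nat \<times> nat \<Rightarrow> nat \<times> nat \<Rightarrow> bool" where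
  "is_parent T p r \<longleftrightarrow>
     (if has_above T p
      then snd r = snd p \<and> fst r < fst p \<and> r \<in> T \<and>
           (\<forall>i'. fst r < i' \<and> i' < fst p \<longrightarrow> (i', snd p) \<notin> T)
      else fst r = fst p \<and> snd r < snd p \<and> r \<in> T \<and>
           (\<forall>j'. snd r < j' \<and> j' < snd p \<longrightarrow> (fst p, j') \<notin> T))"

definition unique_parent_direction :: "(nat \<times> nat) set \<Rightarrow> bool" where
  "unique_parent_direction T \<longleftrightarrow> (\<forall>p\<in>T. p \<noteq> (1,1) \<longrightarrow> has_above T p \<noteq> has_left T p)"

definition rel_children :: "(nat \<times> nat) set \<Rightarrow> nat \<times> nat \<Rightarrow> (nat \<times> nat) set" where
  "rel_children T r = {p \<in> T. p \<noteq> (1,1) \<and> is_parent T p r}"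

definition rel_leaves :: "(nat \<times> nat) set \<Rightarrow> (nat \<times> nat) set" where
  "rel_leaves T = {r \<in> T. rel_children T r = {}}"

definition antidiagonal :: "nat \<Rightarrow> (nat \<times> nat) set" where
  "antidiagonal n = {(i, n + 1 - i) | i. 1 \<le> i \<and> i \<le> n}"

lemma Greatest_nat_eq_iff:
  fixes P :: "nat \<Rightarrow> bool"
  assumes "P z" "\<And>y. P y \<Longrightarrow> y \<le> b"
  shows "Greatest P = m \<longleftrightarrow> P m \<and> (\<forall>y. P y \<longrightarrow> y \<le> m)"
proof
  assume "Greatest P = m"
  moreover have "P (Greatest P)" using GreatestI_nat[of P z b] assms by blast
  moreover have "\<forall>y. P y \<longrightarrow> y \<le> Greatest P" using Greatest_le_nat[of P _ b] assms by blast
  ultimately show "P m \<and> (\<forall>y. P y \<longrightarrow> y \<le> m)" by blast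
next
  assume "P m \<and> (\<forall>y. P y \<longrightarrow> y \<le> m)"
  then show "Greatest P = m" by (intro Greatest_equality) auto
qed

lemma parent_eq_iff_is_parent:
  assumes "has_above T p \<or> has_left T p"
  shows "parent T p = r \<longleftrightarrow> is_parent T p r"
proof -
  obtain i j where p: "p = (i,j)" by fastforce
  obtain r1 r2 where r: "r = (r1,r2)" by fastforce
  show ?thesis
  proof (cases "has_above T p")
    case True
    then obtain x where x: "x < i" "(x,j) \<in> T" unfolding has_above_def p by auto
    have "Greatest (\<lambda>i'. i' < i \<and> (i', j) \<in> T) = r1 \<longleftrightarrow>
       (r1 < i \<and> (r1,j) \<in> T) \<and> (\<forall>y. y < i \<and> (y,j) \<in> T \<longrightarrow> y \<le> r1)"
      by (rule Greatest_nat_eq_iff[where z = x and b = i]) (use x in auto)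
    then show ?thesis using True x unfolding parent_def is_parent_def p r has_above_def
      by (auto simp: Let_def not_le)
  next
    case False
    then obtain x where x: "x < j" "(i,x) \<in> T" using assms unfolding has_left_def p by auto
    have "Greatest (\<lambda>j'. j' < j \<and> (i, j') \<in> T) = r2 \<longleftrightarrow>
       (r2 < j \<and> (i,r2) \<in> T) \<and> (\<forall>y. y < j \<and> (i,y) \<in> T \<longrightarrow> y \<le> r2)"
      by (rule Greatest_nat_eq_iff[where z = x and b = j]) (use x in auto)
    then show ?thesis using False x unfolding parent_def is_parent_def p r has_above_def
      by (auto simp: Let_def not_le)
  qed
qed

lemma children_eq_rel_children:
  "unique_parent_direction T \<Longrightarrow> children T r = rel_children T r"
  unfolding children_def rel_children_def unique_parent_direction_def
  using parent_eq_iff_is_parent by blast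

lemma leaves_eq_rel_leaves: "unique_parent_direction T \<Longrightarrow> leaves T = rel_leaves T"
  unfolding leaves_def rel_leaves_def using children_eq_rel_children by auto

lemma is_CNM_iff_rel:
  "is_CNM n T \<longleftrightarrow> T \<subseteq> {1..n} \<times> {1..n} \<and> (1,1) \<in> T \<and> unique_parent_direction T \<and>
     (\<forall>i\<in>{1..n}. \<exists>j. (i,j) \<in> T) \<and> (\<forall>j\<in>{1..n}. \<exists>i. (i,j) \<in> T) \<and>
     (\<forall>r\<in>T. card (rel_children T r) = 0 \<or> card (rel_children T r) = 2)"
proof -
  have direction: "unique_parent_direction T \<longleftrightarrow> (\<forall>(i,j)\<in>T. (i,j) \<noteq> (1,1) \<longrightarrow>
         ((\<exists>i'<i. (i',j) \<in> T) \<noteq> (\<exists>j'<j. (i,j') \<in> T)))"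
    unfolding unique_parent_direction_def has_above_def has_left_def
    by (simp add: case_prod_beta prod_eq_iff)
  show ?thesis unfolding is_CNM_def direction[symmetric] using children_eq_rel_children by auto
qed

lemma upper_diagonal_CNM_iff_rel:
  "upper_diagonal_CNM n T \<longleftrightarrow> is_CNM n T \<and> rel_leaves T = antidiagonal n"
proof (cases "is_CNM n T")
  case True
  then have "unique_parent_direction T" unfolding is_CNM_iff_rel by simp
  then have "leaves T = rel_leaves T" by (rule leaves_eq_rel_leaves)
  then show ?thesis unfolding upper_diagonal_CNM_def antidiagonal_def using True by simp
qed (simp add: upper_diagonal_CNM_def)

lemma upper_diagonal_CNM_unique_parent_direction:
  "upper_diagonal_CNM n T \<Longrightarrow> unique_parent_direction T"
  unfolding upper_diagonal_CNM_def is_CNM_iff_rel by auto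

lemma upper_diagonal_CNM_finite: "upper_diagonal_CNM n T \<Longrightarrow> finite T"
  unfolding upper_diagonal_CNM_def is_CNM_def
  by (meson finite_SigmaI finite_atLeastAtMost finite_subset)

lemma upper_diagonal_CNM_antidiagonal:
  "upper_diagonal_CNM n T \<Longrightarrow> 1 \<le> i \<Longrightarrow> i \<le> n \<Longrightarrow> (i, n + 1 - i) \<in> T"
  unfolding upper_diagonal_CNM_def leaves_def by auto

lemma is_parent_less:
  "is_parent T p r \<Longrightarrow> fst r \<le> fst p \<and> snd r \<le> snd p \<and> fst r + snd r < fst p + snd p"
  unfolding is_parent_def by (auto split: if_splits)

lemma exists_leaf_below:
  assumes "T \<subseteq> {1..n} \<times> {1..n}" "p \<in> T"
  shows "\<exists>l\<in>rel_leaves T. fst p \<le> fst l \<and> snd p \<le> snd l"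
  using assms(2)
proof (induction p rule: measure_induct_rule[where f = "\<lambda>p. 2 * n - (fst p + snd p)"])
  case (less p)
  show ?case
  proof (cases "rel_children T p = {}")
    case True
    then show ?thesis using less.prems unfolding rel_leaves_def by (intro bexI[of _ p]) auto
  next
    case False
    then obtain p' where p': "p' \<in> T" "is_parent T p' p" unfolding rel_children_def by auto
    have below: "fst p \<le> fst p'" "snd p \<le> snd p'" "fst p + snd p < fst p' + snd p'"
      using is_parent_less[OF p'(2)] by auto
    have "fst p' \<le> n" "snd p' \<le> n" using assms(1) p'(1) by auto
    then have "2 * n - (fst p' + snd p') < 2 * n - (fst p + snd p)" using below by linarith
    then obtain l where "l \<in> rel_leaves T" "fst p' \<le> fst l" "snd p' \<le> snd l"
      using less.IH p'(1) by blast
    then show ?thesis using below by (meson le_trans)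
  qed
qed

lemma upper_diagonal_CNM_below_antidiagonal:
  assumes "upper_diagonal_CNM n T" "(i,j) \<in> T"
  shows "i + j \<le> n + 1"
proof -
  have box: "T \<subseteq> {1..n} \<times> {1..n}" and leaves: "rel_leaves T = antidiagonal n"
    using assms(1) unfolding upper_diagonal_CNM_iff_rel is_CNM_def by auto
  obtain l where "l \<in> rel_leaves T" "i \<le> fst l" "j \<le> snd l"
    using exists_leaf_below[OF box assms(2)] by auto
  then show ?thesis using leaves unfolding antidiagonal_def by auto
qed

section \<open>Grafting a cherry\<close>

text \<open>Size \<open>N\<close> to size \<open>N + 1\<close>: \<open>shift\<close> skips the new row \<open>k + 1\<close> and the new column
  \<open>N + 2 - k\<close>, which contain only the two new leaves; the antidiagonal leaf \<open>root\<close> of size \<open>N\<close>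
  is a fixed point of \<open>shift\<close> and becomes a subdiagonal vertex of size \<open>N + 1\<close>.\<close>

locale cherry_insertion =
  fixes N k :: nat
  assumes k_pos: "1 \<le> k" and k_le: "k \<le> N"
begin

definition "new_col = N + 2 - k"
definition row_shift :: "nat \<Rightarrow> nat" where "row_shift i = (if i \<le> k then i else Suc i)"
definition col_shift :: "nat \<Rightarrow> nat" where "col_shift j = (if j < new_col then j else Suc j)"
definition shift :: "nat \<times> nat \<Rightarrow> nat \<times> nat" where "shift p = (row_shift (fst p), col_shift (snd p))"
definition "root = (k, N + 1 - k)"
definition "leaf_right = (k, new_col)"
definition "leaf_below = (Suc k, N + 1 - k)"
definition graft :: "(nat \<times> nat) set \<Rightarrow> (nat \<times> nat) set" where
  "graft T = shift ` T \<union> {leaf_right, leaf_below}"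

lemma new_col_facts: "N + 1 - k < new_col" "new_col \<le> N + 1" "2 \<le> new_col" "k + new_col = N + 2"
  using k_pos k_le unfolding new_col_def by auto

lemma row_shift_less_iff[simp]: "row_shift x < row_shift y \<longleftrightarrow> x < y"
  unfolding row_shift_def by auto
lemma row_shift_eq_iff[simp]: "row_shift x = row_shift y \<longleftrightarrow> x = y"
  unfolding row_shift_def by auto
lemma col_shift_less_iff[simp]: "col_shift x < col_shift y \<longleftrightarrow> x < y"
  unfolding col_shift_def by auto
lemma col_shift_eq_iff[simp]: "col_shift x = col_shift y \<longleftrightarrow> x = y"
  unfolding col_shift_def by auto
lemma row_shift_neq[simp]: "row_shift x \<noteq> Suc k" "Suc k \<noteq> row_shift x"
  unfolding row_shift_def by auto
lemma col_shift_neq[simp]: "col_shift y \<noteq> new_col" "new_col \<noteq> col_shift y"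
  unfolding col_shift_def by auto

lemma row_shift_surj: "x \<noteq> Suc k \<Longrightarrow> \<exists>i. row_shift i = x"
  unfolding row_shift_def by (cases "x \<le> k") (auto intro: exI[of _ "x - 1"])
lemma col_shift_surj: "y \<noteq> new_col \<Longrightarrow> \<exists>j. col_shift j = y"
  unfolding col_shift_def using new_col_facts by (cases "y < new_col") (auto intro: exI[of _ "y - 1"])

lemma shift_eq_iff[simp]: "shift p = shift p' \<longleftrightarrow> p = p'"
  unfolding shift_def by (auto simp: prod_eq_iff)
lemma inj_shift: "inj shift"
  by (auto intro: injI)
lemma shift_neq_leaves[simp]:
  "shift p \<noteq> leaf_right" "shift p \<noteq> leaf_below" "leaf_right \<noteq> shift p" "leaf_below \<noteq> shift p"
  unfolding shift_def leaf_right_def leaf_below_def by auto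
lemma leaf_right_neq_leaf_below[simp]: "leaf_right \<noteq> leaf_below" "leaf_below \<noteq> leaf_right"
  unfolding leaf_right_def leaf_below_def by auto
lemma shift_root[simp]: "shift root = root"
  unfolding shift_def root_def row_shift_def col_shift_def using new_col_facts by auto
lemma shift_eq_11_iff[simp]: "shift p = (1,1) \<longleftrightarrow> p = (1,1)"
  unfolding shift_def row_shift_def col_shift_def using new_col_facts k_pos
  by (auto simp: prod_eq_iff split: if_splits)
lemma leaves_neq_11[simp]: "leaf_right \<noteq> (1,1)" "leaf_below \<noteq> (1,1)"
  unfolding leaf_right_def leaf_below_def using new_col_facts by auto
lemma root_neq_leaves[simp]:
  "root \<noteq> leaf_right" "root \<noteq> leaf_below" "leaf_right \<noteq> root" "leaf_below \<noteq> root"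
  unfolding leaf_right_def leaf_below_def root_def using new_col_facts by auto

lemma shift_sum_le:
  assumes "row_shift i + col_shift j \<le> N + 2" shows "i + j \<le> N + 1"
  using assms new_col_facts unfolding row_shift_def col_shift_def by (auto split: if_splits)

lemma mem_graft: "x \<in> graft T \<longleftrightarrow> (\<exists>p\<in>T. x = shift p) \<or> x = leaf_right \<or> x = leaf_below"
  unfolding graft_def by auto

lemma shift_mem_graft[simp]: "shift p \<in> graft T \<longleftrightarrow> p \<in> T"
  unfolding graft_def by (auto simp: inj_image_mem_iff[OF inj_shift])

lemma shift_pair_mem_graft[intro]: "(i,j) \<in> T \<Longrightarrow> (row_shift i, col_shift j) \<in> graft T"
  using shift_mem_graft[of "(i,j)"] unfolding shift_def by simp

lemma leaves_mem_graft[simp]: "leaf_right \<in> graft T" "leaf_below \<in> graft T"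
  unfolding graft_def by auto

lemma graft_inj: "graft T = graft T' \<Longrightarrow> T = T'"
  by (metis shift_mem_graft subsetI subset_antisym)

end

locale cherry_graft = cherry_insertion +
  fixes T :: "(nat \<times> nat) set"
  assumes below_antidiagonal: "\<And>i j. (i,j) \<in> T \<Longrightarrow> i + j \<le> N + 1"
    and root_mem: "root \<in> T"
    and finite_T: "finite T"
begin

lemma root_mem_graft[simp]: "root \<in> graft T"
  using shift_mem_graft[of root] root_mem by simp

lemma graft_cases:
  assumes "x \<in> graft T"
  obtains (shift) p where "p \<in> T" "x = shift p" | (right) "x = leaf_right" | (below) "x = leaf_below"
  using assms unfolding mem_graft by blast

lemma graft_column_above_shift:
  assumes "(x, col_shift j) \<in> graft T" "(i,j) \<in> T" "x < row_shift i"
  shows "\<exists>y. x = row_shift y \<and> (y,j) \<in> T"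
  using assms(1)
proof (cases rule: graft_cases)
  case (shift p)
  then show ?thesis unfolding shift_def by (cases p) auto
next
  case right
  then show ?thesis unfolding leaf_right_def by auto
next
  case below
  then have "x = Suc k" "col_shift j = N + 1 - k" unfolding leaf_below_def by auto
  then show ?thesis using assms(3) below_antidiagonal[OF assms(2)] new_col_facts
    unfolding col_shift_def row_shift_def by (auto split: if_splits)
qed

lemma graft_row_left_of_shift:
  assumes "(row_shift i, y) \<in> graft T" "(i,j) \<in> T" "y < col_shift j"
  shows "\<exists>z. y = col_shift z \<and> (i,z) \<in> T"
  using assms(1)
proof (cases rule: graft_cases)
  case (shift p)
  then show ?thesis unfolding shift_def by (cases p) auto
next
  case right
  then have "row_shift i = k" "y = new_col" unfolding leaf_right_def by auto
  then show ?thesis using assms(3) below_antidiagonal[OF assms(2)] new_col_facts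
    unfolding col_shift_def row_shift_def by (auto split: if_splits)
next
  case below
  then show ?thesis unfolding leaf_below_def by auto
qed

lemma has_above_shift_iff:
  assumes "p \<in> T" shows "has_above (graft T) (shift p) \<longleftrightarrow> has_above T p"
proof -
  obtain i j where p: "p = (i,j)" by fastforce
  have "(\<exists>x<row_shift i. (x, col_shift j) \<in> graft T) \<longleftrightarrow> (\<exists>y<i. (y, j) \<in> T)"
    using graft_column_above_shift[of _ j i] assms p by (metis row_shift_less_iff shift_pair_mem_graft)
  then show ?thesis unfolding has_above_def p shift_def by simp
qed

lemma has_left_shift_iff:
  assumes "p \<in> T" shows "has_left (graft T) (shift p) \<longleftrightarrow> has_left T p"
proof -
  obtain i j where p: "p = (i,j)" by fastforce
  have "(\<exists>y<col_shift j. (row_shift i, y) \<in> graft T) \<longleftrightarrow> (\<exists>z<j. (i, z) \<in> T)"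
    using graft_row_left_of_shift[of i _ j] assms p by (metis col_shift_less_iff shift_pair_mem_graft)
  then show ?thesis unfolding has_left_def p shift_def by simp
qed

lemma leaf_right_direction: "\<not> has_above (graft T) leaf_right" "has_left (graft T) leaf_right"
proof -
  show "\<not> has_above (graft T) leaf_right"
    unfolding has_above_def leaf_right_def mem_graft using new_col_facts
    by (auto simp: shift_def leaf_right_def leaf_below_def)
  show "has_left (graft T) leaf_right"
    using root_mem_graft new_col_facts unfolding has_left_def leaf_right_def root_def by auto
qed

lemma leaf_below_direction: "has_above (graft T) leaf_below" "\<not> has_left (graft T) leaf_below"
proof -
  show "has_above (graft T) leaf_below"
    using root_mem_graft unfolding has_above_def leaf_below_def root_def by auto
  show "\<not> has_left (graft T) leaf_below"
    unfolding has_left_def leaf_below_def mem_graft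
    by (auto simp: shift_def leaf_right_def leaf_below_def)
qed

lemma unique_parent_direction_graft_iff:
  "unique_parent_direction (graft T) \<longleftrightarrow> unique_parent_direction T"
proof
  assume graft: "unique_parent_direction (graft T)"
  show "unique_parent_direction T" unfolding unique_parent_direction_def
  proof (intro ballI impI)
    fix p assume "p \<in> T" "p \<noteq> (1,1)"
    then have "shift p \<in> graft T" "shift p \<noteq> (1,1)" using shift_eq_11_iff by simp_all
    then have "has_above (graft T) (shift p) \<noteq> has_left (graft T) (shift p)"
      using graft unfolding unique_parent_direction_def by blast
    then show "has_above T p \<noteq> has_left T p"
      using has_above_shift_iff has_left_shift_iff \<open>p \<in> T\<close> by auto
  qed
next
  assume orig: "unique_parent_direction T"
  show "unique_parent_direction (graft T)" unfolding unique_parent_direction_def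
  proof (intro ballI impI)
    fix x assume "x \<in> graft T" "x \<noteq> (1,1)"
    then show "has_above (graft T) x \<noteq> has_left (graft T) x"
    proof (cases rule: graft_cases)
      case (shift p)
      then have "p \<noteq> (1,1)" using \<open>x \<noteq> (1,1)\<close> shift_eq_11_iff by blast
      then have "has_above T p \<noteq> has_left T p"
        using orig shift(1) unfolding unique_parent_direction_def by blast
      then show ?thesis using has_above_shift_iff has_left_shift_iff shift by simp
    qed (use leaf_right_direction leaf_below_direction in auto)
  qed
qed

lemma is_parent_shift_iff:
  assumes "p \<in> T" "p' \<in> T"
  shows "is_parent (graft T) (shift p) (shift p') \<longleftrightarrow> is_parent T p p'"
proof -
  obtain i j where p: "p = (i,j)" by fastforce
  obtain i' j' where p': "p' = (i',j')" by fastforce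
  show ?thesis
  proof (cases "has_above T p")
    case True
    have "(\<forall>x. row_shift i' < x \<and> x < row_shift i \<longrightarrow> (x, col_shift j) \<notin> graft T) \<longleftrightarrow>
          (\<forall>y. i' < y \<and> y < i \<longrightarrow> (y, j) \<notin> T)"
      using graft_column_above_shift[of _ j i] assms(1) p
      by (metis row_shift_less_iff shift_pair_mem_graft)
    then show ?thesis using True has_above_shift_iff assms
      unfolding is_parent_def p p' shift_def by auto
  next
    case False
    have "(\<forall>y. col_shift j' < y \<and> y < col_shift j \<longrightarrow> (row_shift i, y) \<notin> graft T) \<longleftrightarrow>
          (\<forall>z. j' < z \<and> z < j \<longrightarrow> (i, z) \<notin> T)"
      using graft_row_left_of_shift[of i _ j] assms(1) p
      by (metis col_shift_less_iff shift_pair_mem_graft)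
    then show ?thesis using False has_above_shift_iff assms
      unfolding is_parent_def p p' shift_def by auto
  qed
qed

lemma not_is_parent_shift_leaves:
  assumes "p \<in> T"
  shows "\<not> is_parent (graft T) (shift p) leaf_right" "\<not> is_parent (graft T) (shift p) leaf_below"
proof -
  obtain i j where p: "p = (i,j)" by fastforce
  have sum: "i + j \<le> N + 1" using below_antidiagonal assms p by auto
  show "\<not> is_parent (graft T) (shift p) leaf_right"
  proof
    assume "is_parent (graft T) (shift p) leaf_right"
    then have "row_shift i = k" "new_col < col_shift j"
      unfolding is_parent_def leaf_right_def shift_def p by (auto split: if_splits)
    then show False using sum new_col_facts unfolding row_shift_def col_shift_def
      by (auto split: if_splits)
  qed
  show "\<not> is_parent (graft T) (shift p) leaf_below"
  proof
    assume "is_parent (graft T) (shift p) leaf_below"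
    then have "col_shift j = N + 1 - k" "Suc k < row_shift i"
      unfolding is_parent_def leaf_below_def shift_def p by (auto split: if_splits)
    then show False using sum new_col_facts unfolding row_shift_def col_shift_def
      by (auto split: if_splits)
  qed
qed

lemma is_parent_leaves_iff:
  "is_parent (graft T) leaf_right r \<longleftrightarrow> r = root"
  "is_parent (graft T) leaf_below r \<longleftrightarrow> r = root"
proof -
  show "is_parent (graft T) leaf_right r \<longleftrightarrow> r = root"
  proof
    assume "is_parent (graft T) leaf_right r"
    then have r: "fst r = k" "snd r < new_col"
      "\<forall>j'. snd r < j' \<and> j' < new_col \<longrightarrow> (k, j') \<notin> graft T"
      using leaf_right_direction unfolding is_parent_def leaf_right_def by auto
    have "\<not> snd r < N + 1 - k" using r(3) root_mem_graft new_col_facts unfolding root_def by auto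
    then show "r = root" using r(1,2) new_col_facts unfolding root_def by (simp add: prod_eq_iff)
  next
    assume "r = root"
    then show "is_parent (graft T) leaf_right r"
      using leaf_right_direction new_col_facts root_mem_graft
      unfolding is_parent_def leaf_right_def root_def by auto
  qed
  show "is_parent (graft T) leaf_below r \<longleftrightarrow> r = root"
  proof
    assume "is_parent (graft T) leaf_below r"
    then have r: "snd r = N + 1 - k" "fst r < Suc k"
      "\<forall>i'. fst r < i' \<and> i' < Suc k \<longrightarrow> (i', N + 1 - k) \<notin> graft T"
      using leaf_below_direction unfolding is_parent_def leaf_below_def by auto
    have "\<not> fst r < k" using r(3) root_mem_graft unfolding root_def by auto
    then show "r = root" using r(1,2) unfolding root_def by (simp add: prod_eq_iff)
  next
    assume "r = root"
    then show "is_parent (graft T) leaf_below r"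
      using leaf_below_direction root_mem_graft unfolding is_parent_def leaf_below_def root_def by auto
  qed
qed

lemma rel_children_graft_shift:
  assumes "p \<in> T"
  shows "rel_children (graft T) (shift p) =
         shift ` rel_children T p \<union> (if p = root then {leaf_right, leaf_below} else {})"
proof (rule set_eqI)
  fix x
  show "x \<in> rel_children (graft T) (shift p) \<longleftrightarrow>
        x \<in> shift ` rel_children T p \<union> (if p = root then {leaf_right, leaf_below} else {})"
  proof
    assume "x \<in> rel_children (graft T) (shift p)"
    then have x: "x \<in> graft T" "x \<noteq> (1,1)" "is_parent (graft T) x (shift p)"
      unfolding rel_children_def by auto
    from x(1) show "x \<in> shift ` rel_children T p \<union> (if p = root then {leaf_right, leaf_below} else {})"
    proof (cases rule: graft_cases)
      case (shift p')
      then have "p' \<noteq> (1,1)" using x(2) shift_eq_11_iff by blast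
      then have "p' \<in> rel_children T p"
        using shift x(3) is_parent_shift_iff assms unfolding rel_children_def by auto
      then show ?thesis using shift by simp
    next
      case right
      then have "p = root" using x(3) is_parent_leaves_iff by (metis shift_eq_iff shift_root)
      then show ?thesis using right by simp
    next
      case below
      then have "p = root" using x(3) is_parent_leaves_iff by (metis shift_eq_iff shift_root)
      then show ?thesis using below by simp
    qed
  next
    assume "x \<in> shift ` rel_children T p \<union> (if p = root then {leaf_right, leaf_below} else {})"
    then consider (shift) p' where "p' \<in> rel_children T p" "x = shift p'"
      | (leaf) "p = root" "x = leaf_right \<or> x = leaf_below"
      by (auto split: if_splits)
    then show "x \<in> rel_children (graft T) (shift p)"
    proof cases
      case shift
      then have "shift p' \<noteq> (1,1)" using shift_eq_11_iff unfolding rel_children_def by blast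
      then show ?thesis using shift is_parent_shift_iff assms unfolding rel_children_def by auto
    next
      case leaf
      have "x \<in> graft T" using leaf by auto
      moreover have "x \<noteq> (1,1)" using leaf(2) leaves_neq_11 by metis
      moreover have "is_parent (graft T) x (shift p)" using leaf is_parent_leaves_iff[of root] by auto
      ultimately show ?thesis unfolding rel_children_def by blast
    qed
  qed
qed

lemma rel_children_graft_leaves:
  "rel_children (graft T) leaf_right = {}" "rel_children (graft T) leaf_below = {}"
proof -
  have "\<not> is_parent (graft T) x leaf_right \<and> \<not> is_parent (graft T) x leaf_below"
    if "x \<in> graft T" for x
    using that not_is_parent_shift_leaves is_parent_leaves_iff root_neq_leaves
    by (cases rule: graft_cases) auto
  then show "rel_children (graft T) leaf_right = {}" "rel_children (graft T) leaf_below = {}"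
    unfolding rel_children_def by auto
qed

lemma card_rel_children_graft_shift:
  assumes "p \<in> T"
  shows "card (rel_children (graft T) (shift p)) = card (rel_children T p) + (if p = root then 2 else 0)"
proof -
  have finite: "finite (rel_children T p)" using finite_T unfolding rel_children_def by auto
  have card_image: "card (shift ` rel_children T p) = card (rel_children T p)"
    using inj_shift by (simp add: card_image inj_on_def)
  show ?thesis
  proof (cases "p = root")
    case True
    have "card (shift ` rel_children T p \<union> {leaf_right, leaf_below}) =
          card (shift ` rel_children T p) + card {leaf_right, leaf_below}"
      using finite by (intro card_Un_disjoint) auto
    then show ?thesis using rel_children_graft_shift[OF assms] True card_image by simp
  next
    case False
    then show ?thesis using rel_children_graft_shift[OF assms] card_image by simp
  qed
qed

lemma binary_graft_iff:
  "(\<forall>x\<in>graft T. card (rel_children (graft T) x) = 0 \<or> card (rel_children (graft T) x) = 2) \<longleftrightarrow>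
   (\<forall>p\<in>T. card (rel_children T p) = 0 \<or> card (rel_children T p) = 2) \<and> rel_children T root = {}"
proof
  assume graft: "\<forall>x\<in>graft T. card (rel_children (graft T) x) = 0 \<or> card (rel_children (graft T) x) = 2"
  have "card (rel_children T root) = 0"
    using graft[rule_format, of "shift root"] card_rel_children_graft_shift[OF root_mem] root_mem by auto
  then have root_leaf: "rel_children T root = {}"
    using finite_T unfolding rel_children_def by auto
  have "card (rel_children T p) = 0 \<or> card (rel_children T p) = 2" if "p \<in> T" for p
    using graft[rule_format, of "shift p"] card_rel_children_graft_shift[OF that] that root_leaf
    by (cases "p = root") auto
  then show "(\<forall>p\<in>T. card (rel_children T p) = 0 \<or> card (rel_children T p) = 2) \<and>
             rel_children T root = {}" using root_leaf by auto
next
  assume orig: "(\<forall>p\<in>T. card (rel_children T p) = 0 \<or> card (rel_children T p) = 2) \<and>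
                rel_children T root = {}"
  show "\<forall>x\<in>graft T. card (rel_children (graft T) x) = 0 \<or> card (rel_children (graft T) x) = 2"
  proof
    fix x assume "x \<in> graft T"
    then show "card (rel_children (graft T) x) = 0 \<or> card (rel_children (graft T) x) = 2"
    proof (cases rule: graft_cases)
      case (shift p)
      then show ?thesis using card_rel_children_graft_shift[OF shift(1)] orig by auto
    qed (simp_all add: rel_children_graft_leaves)
  qed
qed

lemma box_graft_iff: "graft T \<subseteq> {1..Suc N} \<times> {1..Suc N} \<longleftrightarrow> T \<subseteq> {1..N} \<times> {1..N}"
proof
  assume box: "graft T \<subseteq> {1..Suc N} \<times> {1..Suc N}"
  show "T \<subseteq> {1..N} \<times> {1..N}"
  proof
    fix p assume "p \<in> T"
    then have "shift p \<in> {1..Suc N} \<times> {1..Suc N}" using box by auto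
    then show "p \<in> {1..N} \<times> {1..N}" using new_col_facts k_pos k_le
      unfolding shift_def row_shift_def col_shift_def by (cases p) (auto split: if_splits)
  qed
next
  assume box: "T \<subseteq> {1..N} \<times> {1..N}"
  show "graft T \<subseteq> {1..Suc N} \<times> {1..Suc N}"
    using box new_col_facts k_pos k_le
    unfolding graft_def shift_def row_shift_def col_shift_def leaf_right_def leaf_below_def by auto
qed

lemma rows_graft_iff:
  "(\<forall>i\<in>{1..Suc N}. \<exists>j. (i,j) \<in> graft T) \<longleftrightarrow> (\<forall>i\<in>{1..N}. \<exists>j. (i,j) \<in> T)"
proof
  assume rows: "\<forall>i\<in>{1..Suc N}. \<exists>j. (i,j) \<in> graft T"
  show "\<forall>i\<in>{1..N}. \<exists>j. (i,j) \<in> T"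
  proof
    fix i assume i: "i \<in> {1..N}"
    then have "row_shift i \<in> {1..Suc N}" unfolding row_shift_def by auto
    then obtain y where "(row_shift i, y) \<in> graft T" using rows by blast
    then show "\<exists>j. (i,j) \<in> T"
    proof (cases rule: graft_cases)
      case (shift p)
      then show ?thesis unfolding shift_def by (cases p) auto
    next
      case right
      then have "i = k" unfolding leaf_right_def row_shift_def by (auto split: if_splits)
      then show ?thesis using root_mem unfolding root_def by auto
    qed (auto simp: leaf_below_def)
  qed
next
  assume rows: "\<forall>i\<in>{1..N}. \<exists>j. (i,j) \<in> T"
  show "\<forall>i\<in>{1..Suc N}. \<exists>j. (i,j) \<in> graft T"
  proof
    fix x assume x: "x \<in> {1..Suc N}"
    show "\<exists>j. (x,j) \<in> graft T"
    proof (cases "x = Suc k")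
      case True
      then show ?thesis using leaves_mem_graft unfolding leaf_below_def by auto
    next
      case False
      then obtain i where i: "row_shift i = x" using row_shift_surj by blast
      then have "i \<in> {1..N}" using x k_le unfolding row_shift_def by (auto split: if_splits)
      then obtain j where "(i,j) \<in> T" using rows by blast
      then show ?thesis using i by blast
    qed
  qed
qed

lemma cols_graft_iff:
  "(\<forall>j\<in>{1..Suc N}. \<exists>i. (i,j) \<in> graft T) \<longleftrightarrow> (\<forall>j\<in>{1..N}. \<exists>i. (i,j) \<in> T)"
proof
  assume cols: "\<forall>j\<in>{1..Suc N}. \<exists>i. (i,j) \<in> graft T"
  show "\<forall>j\<in>{1..N}. \<exists>i. (i,j) \<in> T"
  proof
    fix j assume j: "j \<in> {1..N}"
    then have "col_shift j \<in> {1..Suc N}" unfolding col_shift_def by auto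
    then obtain x where "(x, col_shift j) \<in> graft T" using cols by blast
    then show "\<exists>i. (i,j) \<in> T"
    proof (cases rule: graft_cases)
      case (shift p)
      then show ?thesis unfolding shift_def by (cases p) auto
    next
      case below
      then have "j = N + 1 - k"
        unfolding leaf_below_def col_shift_def using new_col_facts by (auto split: if_splits)
      then show ?thesis using root_mem unfolding root_def by auto
    qed (auto simp: leaf_right_def)
  qed
next
  assume cols: "\<forall>j\<in>{1..N}. \<exists>i. (i,j) \<in> T"
  show "\<forall>j\<in>{1..Suc N}. \<exists>i. (i,j) \<in> graft T"
  proof
    fix y assume y: "y \<in> {1..Suc N}"
    show "\<exists>i. (i,y) \<in> graft T"
    proof (cases "y = new_col")
      case True
      then show ?thesis using leaves_mem_graft unfolding leaf_right_def by auto
    next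
      case False
      then obtain j where j: "col_shift j = y" using col_shift_surj by blast
      then have "j \<in> {1..N}" using y new_col_facts unfolding col_shift_def by (auto split: if_splits)
      then obtain i where "(i,j) \<in> T" using cols by blast
      then show ?thesis using j by blast
    qed
  qed
qed

lemma is_CNM_graft_iff: "is_CNM (Suc N) (graft T) \<longleftrightarrow> is_CNM N T \<and> rel_children T root = {}"
proof -
  have "(1,1) \<in> graft T \<longleftrightarrow> (1,1) \<in> T" by (metis shift_eq_11_iff shift_mem_graft)
  then show ?thesis unfolding is_CNM_iff_rel
    using box_graft_iff unique_parent_direction_graft_iff rows_graft_iff cols_graft_iff binary_graft_iff
    by blast
qed

lemma rel_leaves_graft: "rel_leaves (graft T) = graft (rel_leaves T - {root})"
proof (rule set_eqI)
  fix x
  show "x \<in> rel_leaves (graft T) \<longleftrightarrow> x \<in> graft (rel_leaves T - {root})"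
  proof
    assume "x \<in> rel_leaves (graft T)"
    then have x: "x \<in> graft T" "rel_children (graft T) x = {}" unfolding rel_leaves_def by auto
    from x(1) show "x \<in> graft (rel_leaves T - {root})"
    proof (cases rule: graft_cases)
      case (shift p)
      then have "rel_children T p = {}" "p \<noteq> root"
        using rel_children_graft_shift x(2) by (auto split: if_splits)
      then show ?thesis using shift unfolding rel_leaves_def by auto
    qed auto
  next
    assume "x \<in> graft (rel_leaves T - {root})"
    then consider (shift) p where "p \<in> rel_leaves T" "p \<noteq> root" "x = shift p"
      | "x = leaf_right" | "x = leaf_below"
      unfolding mem_graft by blast
    then show "x \<in> rel_leaves (graft T)"
    proof cases
      case shift
      then show ?thesis using rel_children_graft_shift unfolding rel_leaves_def by auto
    qed (use rel_children_graft_leaves in \<open>auto simp: rel_leaves_def\<close>)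
  qed
qed

end

context cherry_insertion
begin

lemma root_mem_antidiagonal: "root \<in> antidiagonal N"
  unfolding root_def antidiagonal_def using k_pos k_le by auto

lemma graft_antidiagonal: "graft (antidiagonal N - {root}) = antidiagonal (Suc N)"
proof (rule set_eqI)
  fix x
  show "x \<in> graft (antidiagonal N - {root}) \<longleftrightarrow> x \<in> antidiagonal (Suc N)"
  proof
    assume "x \<in> graft (antidiagonal N - {root})"
    then consider (shift) i where "1 \<le> i" "i \<le> N" "i \<noteq> k" "x = shift (i, N + 1 - i)"
      | "x = leaf_right" | "x = leaf_below"
      unfolding mem_graft antidiagonal_def root_def by auto
    then show "x \<in> antidiagonal (Suc N)"
    proof cases
      case shift
      then have "x = (row_shift i, Suc N + 1 - row_shift i)"
        using new_col_facts unfolding shift_def row_shift_def col_shift_def by auto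
      then show ?thesis using shift unfolding antidiagonal_def row_shift_def by auto
    qed (use k_pos k_le new_col_facts in \<open>auto simp: leaf_right_def leaf_below_def antidiagonal_def\<close>)
  next
    assume "x \<in> antidiagonal (Suc N)"
    then obtain i where i: "1 \<le> i" "i \<le> Suc N" "x = (i, Suc N + 1 - i)"
      unfolding antidiagonal_def by auto
    consider "i < k" | "i = k" | "i = Suc k" | "Suc k < i" by linarith
    then show "x \<in> graft (antidiagonal N - {root})"
    proof cases
      case 1
      have "(i, N + 1 - i) \<in> antidiagonal N - {root}"
        using 1 i k_le unfolding antidiagonal_def root_def by auto
      moreover have "shift (i, N + 1 - i) = x"
        using 1 i new_col_facts unfolding shift_def row_shift_def col_shift_def by auto
      ultimately show ?thesis unfolding graft_def by blast
    next
      case 2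
      then show ?thesis using i new_col_facts unfolding graft_def leaf_right_def by auto
    next
      case 3
      then show ?thesis using i unfolding graft_def leaf_below_def by auto
    next
      case 4
      have "(i - 1, N + 1 - (i - 1)) \<in> antidiagonal N - {root}"
        using 4 i k_le unfolding antidiagonal_def root_def by auto
      moreover have "shift (i - 1, N + 1 - (i - 1)) = x"
        using 4 i new_col_facts unfolding shift_def row_shift_def col_shift_def by auto
      ultimately show ?thesis unfolding graft_def by blast
    qed
  qed
qed

lemma graft_new_col: "(x, new_col) \<in> graft T \<Longrightarrow> x = k"
  using new_col_facts unfolding mem_graft shift_def leaf_right_def leaf_below_def by auto

lemma cherry_leaves_mem:
  assumes "upper_diagonal_CNM (Suc N) S"
  shows "leaf_right \<in> S" "leaf_below \<in> S"
  using upper_diagonal_CNM_antidiagonal[OF assms, of k] upper_diagonal_CNM_antidiagonal[OF assms, of "Suc k"]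
    k_pos k_le
  unfolding leaf_right_def leaf_below_def new_col_def by auto

text \<open>Both leaves of a cherry have \<open>root\<close> as a predecessor, so by condition (2) they have no other
  predecessor in their row or column respectively; the antidiagonal bound excludes the rest.\<close>

lemma new_row_singleton:
  assumes S: "upper_diagonal_CNM (Suc N) S" "root \<in> S" and "(Suc k, j) \<in> S"
  shows "j = N + 1 - k"
proof -
  have "Suc k + j \<le> Suc N + 1" using upper_diagonal_CNM_below_antidiagonal[OF S(1) assms(3)] .
  moreover have "\<not> j < N + 1 - k"
  proof
    assume "j < N + 1 - k"
    then have "has_left S leaf_below" "has_above S leaf_below"
      using assms(3) S(2) unfolding has_left_def has_above_def leaf_below_def root_def by auto
    then show False using upper_diagonal_CNM_unique_parent_direction[OF S(1)]
        cherry_leaves_mem[OF S(1)] leaves_neq_11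
      unfolding unique_parent_direction_def by blast
  qed
  ultimately show ?thesis by linarith
qed

lemma new_col_singleton:
  assumes S: "upper_diagonal_CNM (Suc N) S" "root \<in> S" and "(i, new_col) \<in> S"
  shows "i = k"
proof -
  have "i + new_col \<le> Suc N + 1" using upper_diagonal_CNM_below_antidiagonal[OF S(1) assms(3)] .
  moreover have "\<not> i < k"
  proof
    assume "i < k"
    then have "has_above S leaf_right" "has_left S leaf_right"
      using assms(3) S(2) new_col_facts unfolding has_left_def has_above_def leaf_right_def root_def
      by auto
    then show False using upper_diagonal_CNM_unique_parent_direction[OF S(1)]
        cherry_leaves_mem[OF S(1)] leaves_neq_11
      unfolding unique_parent_direction_def by blast
  qed
  ultimately show ?thesis using new_col_facts by linarith
qed

lemma graft_shift_vimage:
  assumes S: "upper_diagonal_CNM (Suc N) S" "root \<in> S"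
  shows "graft (shift -` S) = S"
proof (rule set_eqI)
  fix x :: "nat \<times> nat"
  obtain i j where x: "x = (i,j)" by fastforce
  show "x \<in> graft (shift -` S) \<longleftrightarrow> x \<in> S"
  proof
    assume "x \<in> S"
    consider "i = Suc k" | "j = new_col" | "i \<noteq> Suc k" "j \<noteq> new_col" by blast
    then show "x \<in> graft (shift -` S)"
    proof cases
      case 1
      then show ?thesis using new_row_singleton[OF S] \<open>x \<in> S\<close> x
        unfolding graft_def leaf_below_def by auto
    next
      case 2
      then show ?thesis using new_col_singleton[OF S] \<open>x \<in> S\<close> x
        unfolding graft_def leaf_right_def by auto
    next
      case 3
      then obtain i' j' where "row_shift i' = i" "col_shift j' = j"
        using row_shift_surj col_shift_surj by metis
      then have "x = shift (i', j')" unfolding x shift_def by simp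
      then show ?thesis using \<open>x \<in> S\<close> unfolding graft_def by auto
    qed
  qed (use cherry_leaves_mem[OF S(1)] in \<open>auto simp: graft_def\<close>)
qed

lemma cherry_graft_shift_vimage:
  assumes S: "upper_diagonal_CNM (Suc N) S" "root \<in> S"
  shows "cherry_graft N k (shift -` S)"
proof
  fix i j assume "(i,j) \<in> shift -` S"
  then have "row_shift i + col_shift j \<le> Suc N + 1"
    using upper_diagonal_CNM_below_antidiagonal[OF S(1)] unfolding shift_def by auto
  then show "i + j \<le> N + 1" by (intro shift_sum_le) simp
next
  show "root \<in> shift -` S" using S(2) by simp
  show "finite (shift -` S)"
    using upper_diagonal_CNM_finite[OF S(1)] inj_shift by (rule finite_vimageI)
qed

end

context cherry_graft
begin

lemma upper_diagonal_CNM_graft_iff: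
  "upper_diagonal_CNM (Suc N) (graft T) \<longleftrightarrow> upper_diagonal_CNM N T"
proof
  assume "upper_diagonal_CNM (Suc N) (graft T)"
  then have CNM: "is_CNM N T" and root_leaf: "rel_children T root = {}"
    and leaves: "rel_leaves (graft T) = antidiagonal (Suc N)"
    unfolding upper_diagonal_CNM_iff_rel is_CNM_graft_iff by auto
  have "graft (rel_leaves T - {root}) = graft (antidiagonal N - {root})"
    using leaves rel_leaves_graft graft_antidiagonal by simp
  then have "rel_leaves T - {root} = antidiagonal N - {root}" by (rule graft_inj)
  moreover have "root \<in> rel_leaves T" using root_leaf root_mem unfolding rel_leaves_def by auto
  ultimately have "rel_leaves T = antidiagonal N" using root_mem_antidiagonal by blast
  then show "upper_diagonal_CNM N T" using CNM unfolding upper_diagonal_CNM_iff_rel by simp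
next
  assume "upper_diagonal_CNM N T"
  then have CNM: "is_CNM N T" and leaves: "rel_leaves T = antidiagonal N"
    unfolding upper_diagonal_CNM_iff_rel by auto
  then have "rel_children T root = {}" using root_mem_antidiagonal unfolding rel_leaves_def by auto
  then show "upper_diagonal_CNM (Suc N) (graft T)"
    using CNM leaves rel_leaves_graft graft_antidiagonal
    unfolding upper_diagonal_CNM_iff_rel is_CNM_graft_iff by simp
qed

lemma subdiagonal_mem_graft_iff:
  assumes "1 \<le> i" "i \<le> k - 1"
  shows "(i, Suc N - i) \<in> graft T \<longleftrightarrow> i \<le> k - 2 \<and> (i, N - i) \<in> T"
proof (cases "i \<le> k - 2")
  case True
  then have "shift (i, N - i) = (i, Suc N - i)"
    using assms k_le unfolding shift_def row_shift_def col_shift_def new_col_def by auto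
  then show ?thesis using True shift_mem_graft by metis
next
  case False
  then have "Suc N - i = new_col" "i \<noteq> k" using assms new_col_facts by auto
  then show ?thesis using False graft_new_col by metis
qed

lemma graft_avoids_subdiagonal_iff:
  "(\<forall>i. 1 \<le> i \<and> i \<le> k - 1 \<longrightarrow> (i, Suc N - i) \<notin> graft T) \<longleftrightarrow>
   (\<forall>i. 1 \<le> i \<and> i \<le> k - 2 \<longrightarrow> (i, N - i) \<notin> T)"
  using subdiagonal_mem_graft_iff by (metis diff_le_mono2 le_trans one_le_numeral)

end

section \<open>Counting\<close>

definition avoiding_subdiagonal :: "nat \<Rightarrow> nat \<Rightarrow> (nat \<times> nat) set set" where
  "avoiding_subdiagonal n j =
     {T. upper_diagonal_CNM n T \<and> (\<forall>i. 1 \<le> i \<and> i \<le> j \<longrightarrow> (i, n - i) \<notin> T)}"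

lemma card_cherry_eq_card_avoiding_subdiagonal:
  assumes "1 \<le> k" "k \<le> N"
  shows "card {S \<in> avoiding_subdiagonal (Suc N) (k - 1). (k, Suc N - k) \<in> S} =
         card (avoiding_subdiagonal N (k - 2))"
    (is "card ?cherries = card ?smaller")
proof -
  interpret cherry_insertion N k using assms by unfold_locales
  have root: "(k, Suc N - k) = root" unfolding root_def by simp
  have graft_mem: "graft T \<in> ?cherries" if "T \<in> ?smaller" for T
  proof -
    have T: "upper_diagonal_CNM N T" "\<forall>i. 1 \<le> i \<and> i \<le> k - 2 \<longrightarrow> (i, N - i) \<notin> T"
      using that unfolding avoiding_subdiagonal_def by auto
    interpret cherry_graft N k T
      using upper_diagonal_CNM_below_antidiagonal[OF T(1)] root_mem_antidiagonal
        upper_diagonal_CNM_finite[OF T(1)] T(1)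
      by unfold_locales (auto simp: upper_diagonal_CNM_iff_rel rel_leaves_def)
    show ?thesis using T upper_diagonal_CNM_graft_iff graft_avoids_subdiagonal_iff root_mem_graft
      unfolding avoiding_subdiagonal_def root by auto
  qed
  have vimage_mem: "shift -` S \<in> ?smaller \<and> graft (shift -` S) = S" if "S \<in> ?cherries" for S
  proof -
    have S: "upper_diagonal_CNM (Suc N) S" "root \<in> S"
      and avoids: "\<forall>i. 1 \<le> i \<and> i \<le> k - 1 \<longrightarrow> (i, Suc N - i) \<notin> S"
      using that unfolding avoiding_subdiagonal_def root by auto
    interpret cherry_graft N k "shift -` S" using cherry_graft_shift_vimage[OF S] .
    have "graft (shift -` S) = S" using graft_shift_vimage[OF S] .
    then show ?thesis using S avoids upper_diagonal_CNM_graft_iff graft_avoids_subdiagonal_iff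
      unfolding avoiding_subdiagonal_def by auto
  qed
  have "graft ` ?smaller = ?cherries"
    using graft_mem vimage_mem by (auto intro!: image_eqI[where x = "shift -` _"])
  moreover have "inj_on graft ?smaller" by (rule inj_onI) (rule graft_inj)
  ultimately show ?thesis by (metis card_image)
qed

lemma finite_avoiding_subdiagonal: "finite (avoiding_subdiagonal n j)"
proof (rule finite_subset)
  show "avoiding_subdiagonal n j \<subseteq> Pow ({1..n} \<times> {1..n})"
    unfolding avoiding_subdiagonal_def upper_diagonal_CNM_def is_CNM_def by auto
qed auto

lemma card_avoiding_subdiagonal_Suc:
  "card (avoiding_subdiagonal n j) =
   card (avoiding_subdiagonal n (Suc j)) +
   card {T \<in> avoiding_subdiagonal n j. (Suc j, n - Suc j) \<in> T}"
proof -
  let ?first_hit = "{T \<in> avoiding_subdiagonal n j. (Suc j, n - Suc j) \<in> T}"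
  have "avoiding_subdiagonal n j = avoiding_subdiagonal n (Suc j) \<union> ?first_hit"
    unfolding avoiding_subdiagonal_def using le_Suc_eq by auto
  also have "card \<dots> = card (avoiding_subdiagonal n (Suc j)) + card ?first_hit"
  proof (rule card_Un_disjoint)
    show "finite ?first_hit" by (rule finite_subset[OF _ finite_avoiding_subdiagonal]) auto
    show "finite (avoiding_subdiagonal n (Suc j))" by (rule finite_avoiding_subdiagonal)
    show "avoiding_subdiagonal n (Suc j) \<inter> ?first_hit = {}"
      unfolding avoiding_subdiagonal_def by auto
  qed
  finally show ?thesis .
qed

lemma f_eq_card_first_subdiagonal_vertex:
  assumes "j + 2 \<le> n"
  shows "f n (int j) = int (card {T \<in> avoiding_subdiagonal n j. (Suc j, n - Suc j) \<in> T})"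
  using assms unfolding f_def avoiding_subdiagonal_def by simp

lemma f_eq_card_avoiding_subdiagonal:
  assumes "1 \<le> k" "k \<le> N"
  shows "f (Suc N) (int k - 1) = int (card (avoiding_subdiagonal N (k - 2)))"
proof -
  have "int k - 1 = int (k - 1)" "Suc (k - 1) = k" using assms by auto
  then show ?thesis
    using f_eq_card_first_subdiagonal_vertex[of "k - 1" "Suc N"]
      card_cherry_eq_card_avoiding_subdiagonal[OF assms] assms by simp
qed

lemma f_eq_card_avoiding_subdiagonal_diff:
  assumes "1 \<le> k" "k < n"
  shows "f n (int k - 1) = int (card (avoiding_subdiagonal n (k - 1))) - int (card (avoiding_subdiagonal n k))"
proof -
  have "int k - 1 = int (k - 1)" "Suc (k - 1) = k" using assms by auto
  then show ?thesis
    using f_eq_card_first_subdiagonal_vertex[of "k - 1" n]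
      card_avoiding_subdiagonal_Suc[of n "k - 1"] assms by simp
qed

theorem lemma4p8:
  fixes n :: nat and k :: int
  assumes "n \<ge> 3" and "0 < k" and "k < int n - 1"
  shows "f n k = f n (k - 1) - f (n - 1) (k - 2)"
proof -
  obtain N where n: "n = Suc N" using assms(1) by (cases n) auto
  obtain K where k: "k = int K" using assms(2) by (metis less_imp_le zero_le_imp_eq_int)
  have K: "1 \<le> K" "K + 1 \<le> N" using assms n k by auto
  have "f n k = int (card (avoiding_subdiagonal N (K - 1)))"
    using f_eq_card_avoiding_subdiagonal[of "K + 1" N] K unfolding n k by simp
  moreover have "f n (k - 1) = int (card (avoiding_subdiagonal N (K - 2)))"
    using f_eq_card_avoiding_subdiagonal[of K N] K unfolding n k by simp
  moreover have "f (n - 1) (k - 2) =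
                 int (card (avoiding_subdiagonal N (K - 2))) - int (card (avoiding_subdiagonal N (K - 1)))"
  proof (cases "K = 1")
    case True
    then show ?thesis unfolding n k f_def by simp
  next
    case False
    then have "1 \<le> K - 1" "K - 1 < N" using K by auto
    moreover have "int K - 2 = int (K - 1) - 1" "K - 1 - 1 = K - 2" using K by auto
    ultimately show ?thesis using f_eq_card_avoiding_subdiagonal_diff[of "K - 1" N] unfolding n k by simp
  qed
  ultimately show ?thesis by simp
qed
end
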